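(* Let $n\ge 2$, let $\sigma,\tau$ be positive integers with $|\sigma-\tau|\le1$ and $d=\sigma+\tau$, and let $\mathcal{S}$ be the set of all $\mathbf{T}=(T_{p-q})_{p,q=0}^{n-1}\in\mathcal{T}_{n,d}(\mathcal{O}_{\sigma,\tau})$ such that $T_j$ is noninvertible for every $j\neq0$. Then there are no $A,B\in\mathcal{O}_{\sigma,\tau}$ with $\operatorname{Ker}A\cap\operatorname{Ker}B=\{0\}$ such that $\mathcal{S}=\mathcal{F}_{A,B}^{\mathcal{O}_{\sigma,\tau}}$.
   Context: For $\sigma,\tau$ positive integers with $\sigma+\tau=d$, the Schur algebra is $$\mathcal{O}_{\sigma,\tau}=\left\{\begin{pmatrix}\lambda I_\sigma & X\\ 0 & \lambda I_\tau\end{pmatrix} : \lambda\in\mathbb{C},\ X\in\mathcal{M}_{\sigma\times\tau}(\mathbb{C})\right\}\subseteq\mathcal{M}_{d\times d}(\mathbb{C}),$$ written with respect to $\mathbb{C}^d=\mathbb{C}^\sigma\oplus\mathbb{C}^\tau$. For positive integers $n,d$, $\mathcal{T}_{n,d}$ denotes the set of block Toeplitz matrices $\mathbf{T}=(T_{p-q})_{p,q=0}^{n-1}$: $nd\times nd$ complex matrices partitioned into $n\times n$ blocks of size $d\times d$, whose $(p,q)$ block is $T_{p-q}$ for some $T_{-(n-1)},\dots,T_{n-1}\in\mathcal{M}_{d\times d}(\mathbb{C})$. For a subalgebra $\mathcal{B}\subseteq\mathcal{M}_{d\times d}(\mathbb{C})$, $\mathcal{T}_{n,d}(\mathcal{B})$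 is the set of $\mathbf{T}\in\mathcal{T}_{n,d}$ with all $T_j\in\mathcal{B}$. For $A,B\in\mathcal{M}_{d\times d}(\mathbb{C})$, $$\mathcal{F}_{A,B}^{\mathcal{B}}=\{(T_{p-q})_{p,q=0}^{n-1}\in\mathcal{T}_{n,d}(\mathcal{B}) : AT_j=BT_{j-n}\text{ for } j=1,2,\dots,n-1\}.$$ *)

theory Defs
  imports "Jordan_Normal_Form.Matrix_Kernel"
begin

text \<open>Schur algebra O_{sigma,tau}: d x d complex matrices (d = sigma + tau) of the form
  [[lambda I, X],[0, lambda I]] w.r.t. C^d = C^sigma (+) C^tau (indices 0..<sigma first).\<close>
definition schur_alg :: "nat \<Rightarrow> nat \<Rightarrow> complex mat set" where
  "schur_alg \<sigma> \<tau> = {M \<in> carrier_mat (\<sigma> + \<tau>) (\<sigma> + \<tau>).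
     \<exists>c. \<forall>i < \<sigma> + \<tau>. \<forall>j < \<sigma> + \<tau>.
        (i = j \<longrightarrow> M $$ (i, j) = c) \<and>
        (i \<noteq> j \<and> \<not> (i < \<sigma> \<and> \<sigma> \<le> j) \<longrightarrow> M $$ (i, j) = 0)}"

definition block_toeplitz :: "nat \<Rightarrow> nat \<Rightarrow> (int \<Rightarrow> complex mat) \<Rightarrow> complex mat" where
  "block_toeplitz n d T = mat (n * d) (n * d)
     (\<lambda>(i, j). T (int (i div d) - int (j div d)) $$ (i mod d, j mod d))"

definition toeplitz_in :: "nat \<Rightarrow> nat \<Rightarrow> complex mat set \<Rightarrow> complex mat set" where
  "toeplitz_in n d \<B> = {block_toeplitz n d T | T.
     \<forall>j. - (int n - 1) \<le> j \<and> j \<le> int n - 1 \<longrightarrow> T j \<in> \<B> \<and> T j \<in> carrier_mat d d}"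

definition F_set :: "nat \<Rightarrow> nat \<Rightarrow> complex mat set \<Rightarrow> complex mat \<Rightarrow> complex mat \<Rightarrow> complex mat set" where
  "F_set n d \<B> A B = {block_toeplitz n d T | T.
     (\<forall>j. - (int n - 1) \<le> j \<and> j \<le> int n - 1 \<longrightarrow> T j \<in> \<B> \<and> T j \<in> carrier_mat d d) \<and>
     (\<forall>j. 1 \<le> j \<and> j \<le> int n - 1 \<longrightarrow> A * T j = B * T (j - int n))}"

end

theory Submission
  imports Defs
begin

text \<open>The elementary matrix \<open>E\<^sub>0\<^sub>\<sigma>\<close> lies in \<open>\<O>\<^sub>\<sigma>\<^sub>,\<^sub>\<tau>\<close> and is singular, as is \<open>0\<close>. Placing it
  once as the block \<open>T\<^sub>1\<close> and once as the block \<open>T\<^sub>1\<^sub>-\<^sub>n\<close> (all other blocks zero) gives two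
  members of \<open>\<S>\<close>; if \<open>\<S> = \<F>\<^sub>A\<^sub>,\<^sub>B\<close> they force \<open>A E\<^sub>0\<^sub>\<sigma> = 0 = B E\<^sub>0\<^sub>\<sigma>\<close>, i.e. the scalar
  parts of \<open>A\<close> and \<open>B\<close> vanish. Then \<open>e\<^sub>0\<close> lies in both kernels.\<close>

lemma block_toeplitz_eq_imp_block_eq:
  assumes eq: "block_toeplitz n d T = block_toeplitz n d T'"
    and j: "- (int n - 1) \<le> j" "j \<le> int n - 1"
    and carrier: "T j \<in> carrier_mat d d" "T' j \<in> carrier_mat d d"
  shows "T j = T' j"
proof -
  obtain p q :: nat where pq: "p < n" "q < n" "j = int p - int q"
  proof (cases "j \<ge> 0")
    case True
    then show ?thesis using that[of "nat j" 0] j by auto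
  next
    case False
    then show ?thesis using that[of 0 "nat (- j)"] j by auto
  qed
  have index: "k * d + r < n * d" if "k < n" "r < d" for k r
  proof -
    have "k * d + r < (k + 1) * d" using that by simp
    also have "\<dots> \<le> n * d" using that by (intro mult_right_mono) auto
    finally show ?thesis .
  qed
  show ?thesis
  proof (rule eq_matI)
    fix r s assume "r < dim_row (T' j)" "s < dim_col (T' j)"
    then have rs: "r < d" "s < d" using carrier by auto
    have "block_toeplitz n d T $$ (p * d + r, q * d + s)
        = block_toeplitz n d T' $$ (p * d + r, q * d + s)"
      using eq by simp
    then show "T j $$ (r, s) = T' j $$ (r, s)"
      using pq rs index by (simp add: block_toeplitz_def)
  qed (use carrier in auto)
qed

lemma F_set_block_relation:
  assumes "block_toeplitz n d T \<in> F_set n d \<B> A B"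
    and carrier: "\<And>j. - (int n - 1) \<le> j \<Longrightarrow> j \<le> int n - 1 \<Longrightarrow> T j \<in> carrier_mat d d"
    and j: "1 \<le> j" "j \<le> int n - 1"
  shows "A * T j = B * T (j - int n)"
proof -
  obtain T' where eq: "block_toeplitz n d T = block_toeplitz n d T'"
    and carrier': "\<And>j. - (int n - 1) \<le> j \<Longrightarrow> j \<le> int n - 1 \<Longrightarrow> T' j \<in> carrier_mat d d"
    and relation: "A * T' j = B * T' (j - int n)"
    using assms(1) j unfolding F_set_def by blast
  have "T j = T' j" "T (j - int n) = T' (j - int n)"
    using j by (auto intro!: block_toeplitz_eq_imp_block_eq[OF eq] carrier carrier')
  then show ?thesis using relation by simp
qed

lemma not_invertible_mat_if_kernel_nonzero:
  fixes M :: "'a :: semiring_1 mat"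
  assumes M: "M \<in> carrier_mat d d" and v: "v \<in> carrier_vec d" "v \<noteq> 0\<^sub>v d"
    and Mv: "M *\<^sub>v v = 0\<^sub>v d"
  shows "\<not> invertible_mat M"
proof
  assume "invertible_mat M"
  then obtain M' where M': "M' * M = 1\<^sub>m (dim_row M')" "M * M' = 1\<^sub>m d"
    using M unfolding invertible_mat_def inverts_mat_def by auto
  then have "M' \<in> carrier_mat d d"
    using M by (metis carrier_matD carrier_matI index_mult_mat(2,3) index_one_mat(2,3))
  then have "v = (M' * M) *\<^sub>v v" using M' v by simp
  also have "\<dots> = 0\<^sub>v d" using \<open>M' \<in> carrier_mat d d\<close> M v Mv by auto
  finally show False using v by simp
qed

lemma schur_alg_carrier: "M \<in> schur_alg \<sigma> \<tau> \<Longrightarrow> M \<in> carrier_mat (\<sigma> + \<tau>) (\<sigma> + \<tau>)"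
  unfolding schur_alg_def by simp

lemma zero_mat_in_schur_alg: "0\<^sub>m (\<sigma> + \<tau>) (\<sigma> + \<tau>) \<in> schur_alg \<sigma> \<tau>"
  unfolding schur_alg_def by auto

definition elem_mat :: "nat \<Rightarrow> nat \<Rightarrow> nat \<Rightarrow> 'a :: zero_neq_one mat" where
  "elem_mat d k l = mat d d (\<lambda>(i, j). if i = k \<and> j = l then 1 else 0)"

lemma elem_mat_carrier: "elem_mat d k l \<in> carrier_mat d d"
  unfolding elem_mat_def by simp

lemma elem_mat_in_schur_alg:
  assumes "k < \<sigma>" "\<sigma> \<le> l" "l < \<sigma> + \<tau>"
  shows "elem_mat (\<sigma> + \<tau>) k l \<in> schur_alg \<sigma> \<tau>"
  unfolding schur_alg_def elem_mat_def using assms by (auto intro: exI[of _ 0])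

lemma mult_elem_mat_index:
  fixes A :: "'a :: semiring_1 mat"
  assumes A: "A \<in> carrier_mat d d" and "i < d" "k < d" "l < d"
  shows "(A * elem_mat d k l) $$ (i, l) = A $$ (i, k)"
proof -
  have "(A * elem_mat d k l) $$ (i, l) = (\<Sum>m\<in>{0..<d}. A $$ (i, m) * (if m = k then 1 else 0))"
    using assms by (simp add: elem_mat_def scalar_prod_def)
  also have "\<dots> = A $$ (i, k)"
    using assms by (simp add: if_distrib[of "\<lambda>x. A $$ (i, _) * x"] cong: if_cong)
  finally show ?thesis .
qed

lemma schur_alg_mult_unit_vec_0:
  assumes M: "M \<in> schur_alg \<sigma> \<tau>" and "\<sigma> > 0" and M00: "M $$ (0, 0) = 0"
  shows "M *\<^sub>v unit_vec (\<sigma> + \<tau>) 0 = 0\<^sub>v (\<sigma> + \<tau>)"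
proof -
  obtain c where
    c: "\<forall>i < \<sigma> + \<tau>. \<forall>j < \<sigma> + \<tau>.
      (i = j \<longrightarrow> M $$ (i, j) = c) \<and> (i \<noteq> j \<and> \<not> (i < \<sigma> \<and> \<sigma> \<le> j) \<longrightarrow> M $$ (i, j) = 0)"
    using M unfolding schur_alg_def by blast
  have column_0: "M $$ (i, 0) = 0" if "i < \<sigma> + \<tau>" for i
  proof (cases "i = 0")
    case True
    then show ?thesis using M00 by simp
  next
    case False
    then show ?thesis using c that \<open>\<sigma> > 0\<close> by simp
  qed
  show ?thesis
    using schur_alg_carrier[OF M] \<open>\<sigma> > 0\<close> column_0 by (intro eq_vecI) auto
qed

lemma schur_alg_singular_if_scalar_zero:
  assumes M: "M \<in> schur_alg \<sigma> \<tau>" and "\<sigma> > 0" and "M $$ (0, 0) = 0"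
  shows "\<not> invertible_mat M"
  using assms by (intro not_invertible_mat_if_kernel_nonzero[OF schur_alg_carrier[OF M] _ _
        schur_alg_mult_unit_vec_0]) auto

definition singular_schur_toeplitz :: "nat \<Rightarrow> nat \<Rightarrow> nat \<Rightarrow> complex mat set" where
  "singular_schur_toeplitz n \<sigma> \<tau> = {block_toeplitz n (\<sigma> + \<tau>) T | T.
     (\<forall>j. - (int n - 1) \<le> j \<and> j \<le> int n - 1 \<longrightarrow>
        T j \<in> schur_alg \<sigma> \<tau> \<and> T j \<in> carrier_mat (\<sigma> + \<tau>) (\<sigma> + \<tau>)) \<and>
     (\<forall>j. - (int n - 1) \<le> j \<and> j \<le> int n - 1 \<and> j \<noteq> 0 \<longrightarrow> \<not> invertible_mat (T j))}"

lemma singular_schur_toeplitz_neq_F_set: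
  assumes "n \<ge> 2" and "\<sigma> > 0" and "\<tau> > 0"
    and A: "A \<in> schur_alg \<sigma> \<tau>" and B: "B \<in> schur_alg \<sigma> \<tau>"
    and kernel: "mat_kernel A \<inter> mat_kernel B = {0\<^sub>v (\<sigma> + \<tau>)}"
  shows "singular_schur_toeplitz n \<sigma> \<tau> \<noteq> F_set n (\<sigma> + \<tau>) (schur_alg \<sigma> \<tau>) A B"
proof
  let ?d = "\<sigma> + \<tau>"
  assume F_eq: "singular_schur_toeplitz n \<sigma> \<tau> = F_set n ?d (schur_alg \<sigma> \<tau>) A B"
  define E :: "complex mat" where "E = elem_mat ?d 0 \<sigma>"
  have E_schur: "E \<in> schur_alg \<sigma> \<tau>"
    unfolding E_def using assms(2,3) by (intro elem_mat_in_schur_alg) auto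
  have "E $$ (0, 0) = 0" using assms(2) by (simp add: E_def elem_mat_def)
  then have E: "E \<in> carrier_mat ?d ?d" "\<not> invertible_mat E"
    using schur_alg_singular_if_scalar_zero[OF E_schur assms(2)]
    by (auto simp: E_def elem_mat_carrier)
  have zero: "0\<^sub>m ?d ?d \<in> schur_alg \<sigma> \<tau>" "\<not> invertible_mat (0\<^sub>m ?d ?d :: complex mat)"
    using schur_alg_singular_if_scalar_zero[OF zero_mat_in_schur_alg assms(2)] assms(2)
    by (auto simp: zero_mat_in_schur_alg)
  have relation: "A * T 1 = B * T (1 - int n)"
    if "T = (\<lambda>j. if j = k then E else 0\<^sub>m ?d ?d)" for T k
  proof (rule F_set_block_relation)
    show "block_toeplitz n ?d T \<in> F_set n ?d (schur_alg \<sigma> \<tau>) A B"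
      unfolding F_eq[symmetric] singular_schur_toeplitz_def
      using that E_schur E zero by (intro CollectI exI[of _ T]) auto
  qed (use that E assms(1) in auto)
  have "A * E = 0\<^sub>m ?d ?d" "B * E = 0\<^sub>m ?d ?d"
    using relation[of _ 1] relation[of _ "1 - int n"] assms(1)
      schur_alg_carrier[OF A] schur_alg_carrier[OF B] by auto
  then have "A $$ (0, 0) = 0" "B $$ (0, 0) = 0"
    using mult_elem_mat_index[OF schur_alg_carrier[OF A], of 0 0 \<sigma>]
      mult_elem_mat_index[OF schur_alg_carrier[OF B], of 0 0 \<sigma>] assms(2,3)
    by (auto simp: E_def)
  then have "unit_vec ?d 0 \<in> mat_kernel A \<inter> mat_kernel B"
    using schur_alg_mult_unit_vec_0[OF A] schur_alg_mult_unit_vec_0[OF B]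
      schur_alg_carrier[OF A] schur_alg_carrier[OF B] assms(2)
    by (auto intro!: mat_kernelI)
  then show False using kernel assms(2) by auto
qed

theorem mainTheorem11:
  fixes n \<sigma> \<tau> :: nat
  assumes "n \<ge> 2" and "\<sigma> > 0" and "\<tau> > 0" and "\<bar>int \<sigma> - int \<tau>\<bar> \<le> 1"
  shows "\<not> (\<exists>A B. A \<in> schur_alg \<sigma> \<tau> \<and> B \<in> schur_alg \<sigma> \<tau> \<and>
            mat_kernel A \<inter> mat_kernel B = {0\<^sub>v (\<sigma> + \<tau>)} \<and>
            {block_toeplitz n (\<sigma> + \<tau>) T | T.
               (\<forall>j. - (int n - 1) \<le> j \<and> j \<le> int n - 1 \<longrightarrow>
                  T j \<in> schur_alg \<sigma> \<tau> \<and> T j \<in> carrier_mat (\<sigma> + \<tau>) (\<sigma> + \<tau>)) \<and>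
               (\<forall>j. - (int n - 1) \<le> j \<and> j \<le> int n - 1 \<and> j \<noteq> 0 \<longrightarrow> \<not> invertible_mat (T j))}
            = F_set n (\<sigma> + \<tau>) (schur_alg \<sigma> \<tau>) A B)"
  using singular_schur_toeplitz_neq_F_set[OF assms(1-3)]
  unfolding singular_schur_toeplitz_def by blast

end
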